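(* Let $w$ be analytic on the open unit disk $D=\{|z|<1\}$ and suppose $w$ has a borderline hard singularity at a point $z_1$ with $|z_1|=1$. Then this singularity is integrable: the integral of $w$ along curves in $D$ reaching $z_1$ exists and is a finite complex number.
   Context: An inner analytic function is one analytic on the open unit disk centered at the origin. Its angular primitive is $w^{-1\cdot}(z)=-i\int_0^z\frac{w(z')-w(0)}{z'}dz'$ (integral along any curve in the disk, integrand extended at $0$ by $w'(0)$). A singular point of $w$ on the unit circle is a point where $w$ fails to be analytic; a singularity at $z_1$ is soft if $\lim_{z\to z_1}w(z)$ (from within the disk) exists and is finite, and hard otherwise. A hard singularity of $w$ at $z_1$ is borderline hard (degree of hardness zero) if a single angular integration produces a function $w^{-1\cdot}$ which has a soft singularity at $z_1$. *)

theory Defs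
  imports "HOL-Complex_Analysis.Complex_Analysis"
begin

definition angular_primitive :: "(complex \<Rightarrow> complex) \<Rightarrow> complex \<Rightarrow> complex" where
  "angular_primitive w z =
     - \<i> * contour_integral (linepath 0 z)
              (\<lambda>z'. if z' = 0 then deriv w 0 else (w z' - w 0) / z')"

definition regular_point :: "(complex \<Rightarrow> complex) \<Rightarrow> complex \<Rightarrow> bool" where
  "regular_point w z1 \<longleftrightarrow> (\<exists>g r. r > 0 \<and> g holomorphic_on ball z1 r \<and>
       (\<forall>z \<in> ball z1 r \<inter> ball 0 1. g z = w z))"

definition singular_point :: "(complex \<Rightarrow> complex) \<Rightarrow> complex \<Rightarrow> bool" where
  "singular_point w z1 \<longleftrightarrow> \<not> regular_point w z1"

definition soft_singularity :: "(complex \<Rightarrow> complex) \<Rightarrow> complex \<Rightarrow> bool" where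
  "soft_singularity w z1 \<longleftrightarrow> singular_point w z1 \<and>
       (\<exists>L. (w \<longlongrightarrow> L) (at z1 within ball 0 1))"

definition hard_singularity :: "(complex \<Rightarrow> complex) \<Rightarrow> complex \<Rightarrow> bool" where
  "hard_singularity w z1 \<longleftrightarrow> singular_point w z1 \<and>
       \<not> (\<exists>L. (w \<longlongrightarrow> L) (at z1 within ball 0 1))"

definition borderline_hard_singularity :: "(complex \<Rightarrow> complex) \<Rightarrow> complex \<Rightarrow> bool" where
  "borderline_hard_singularity w z1 \<longleftrightarrow>
     hard_singularity w z1 \<and> soft_singularity (angular_primitive w) z1"

end

theory Submission
  imports Defs
begin

text \<open>
If \<open>P\<close> is the angular primitive of \<open>w\<close> and \<open>Q\<close> a primitive of \<open>P\<close> on the disk, then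
\<open>W z = w 0 * z + \<i> * z * P z - \<i> * Q z\<close> is a primitive of \<open>w\<close>, because \<open>z * P' z = - \<i> * (w z - w 0)\<close>.
A soft singularity of \<open>P\<close> at \<open>z1\<close> makes \<open>P\<close> bounded near \<open>z1\<close>, so \<open>Q\<close> is Lipschitz there and
also has a limit at \<open>z1\<close>; hence so does \<open>W\<close>, and the integral of \<open>w\<close> along any curve
ending at \<open>z1\<close> is the limit of the differences of \<open>W\<close>.
\<close>

lemma angular_primitive_has_field_derivative:
  assumes hol: "w holomorphic_on ball 0 1" and z: "z \<in> ball 0 1"
  shows "(angular_primitive w has_field_derivative
           - \<i> * (if z = 0 then deriv w 0 else (w z - w 0) / z)) (at z)"
proof -
  define f where "f = (\<lambda>z'. if z' = 0 then deriv w 0 else (w z' - w 0) / z')"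
  have f_holo: "f holomorphic_on ball 0 1"
  proof -
    have "(\<lambda>z. if z = 0 then deriv w 0 else (w z - w 0) / (z - 0)) = f"
      by (auto simp: f_def fun_eq_iff)
    with pole_lemma[OF hol, of 0] show ?thesis by simp
  qed
  have segments: "\<And>y. y \<in> ball (0::complex) 1 \<Longrightarrow> closed_segment 0 y \<subseteq> ball 0 1"
    by (simp add: closed_segment_subset convex_ball)
  have triangles: "contour_integral (linepath 0 b) f + contour_integral (linepath b c) f +
                   contour_integral (linepath c 0) f = 0"
    if "closed_segment b c \<subseteq> ball 0 1" for b c
  proof -
    have "convex hull {0, b, c} \<subseteq> ball 0 1"
      using that by (intro hull_minimal) (auto simp: convex_ball)
    then have "f holomorphic_on convex hull {0, b, c}"
      using f_holo holomorphic_on_subset by blast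
    then show ?thesis
      by (rule has_chain_integral_chain_integral3[OF Cauchy_theorem_triangle])
  qed
  have "((\<lambda>x. contour_integral (linepath 0 x) f) has_field_derivative f z) (at z)"
    using f_holo holomorphic_on_imp_continuous_on
    by (intro triangle_contour_integrals_starlike_primitive[OF _ _ open_ball z segments triangles])
       auto
  then show ?thesis
    unfolding angular_primitive_def f_def by (intro DERIV_cmult)
qed

lemma primitive_tendsto_if_derivative_bounded:
  fixes Q :: "complex \<Rightarrow> complex"
  assumes "convex S" and "z1 \<in> closure S" and "z1 \<notin> S"
    and deriv: "\<And>z. z \<in> S \<Longrightarrow> (Q has_field_derivative f z) (at z within S)"
    and bounded: "\<forall>\<^sub>F z in at z1 within S. norm (f z) \<le> M"
  shows "\<exists>L. (Q \<longlongrightarrow> L) (at z1 within S)"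
proof -
  obtain d where "d > 0" and
    bound': "\<forall>z\<in>S. z \<noteq> z1 \<and> dist z z1 < d \<longrightarrow> norm (f z) \<le> M"
    using bounded unfolding eventually_at by blast
  have bound: "norm (f z) \<le> M" if "z \<in> S" "dist z z1 < d" for z
    using bound' that \<open>z1 \<notin> S\<close> by auto
  define T where "T = S \<inter> ball z1 d"
  have "z1 \<in> closure T"
    using open_Int_closure_subset[of "ball z1 d" S] \<open>z1 \<in> closure S\<close> \<open>d > 0\<close>
    by (auto simp: T_def Int_commute)
  then obtain z0 where "z0 \<in> T"
    by (metis closure_empty empty_iff ex_in_conv)
  then have "0 \<le> M"
    using bound[of z0] unfolding T_def by (auto simp: dist_commute intro: order_trans[OF norm_ge_zero])
  have "M-lipschitz_on T Q"
  proof (rule lipschitz_onI[OF _ \<open>0 \<le> M\<close>])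
    fix x y assume "x \<in> T" "y \<in> T"
    have "norm (Q x - Q y) \<le> M * norm (x - y)"
    proof (rule field_differentiable_bound)
      show "convex T"
        unfolding T_def by (intro convex_Int \<open>convex S\<close> convex_ball)
      fix z assume "z \<in> T"
      then show "(Q has_field_derivative f z) (at z within T)"
        unfolding T_def by (intro has_field_derivative_subset[OF deriv]) auto
      show "norm (f z) \<le> M"
        using \<open>z \<in> T\<close> unfolding T_def by (intro bound) (auto simp: dist_commute)
    qed fact+
    then show "dist (Q x) (Q y) \<le> M * dist x y"
      by (simp only: dist_norm)
  qed
  then have "uniformly_continuous_on T Q"
    by (rule lipschitz_on_uniformly_continuous)
  then obtain L where "(Q \<longlongrightarrow> L) (at z1 within T)"
    using uniformly_continuous_on_extension_at_closure \<open>z1 \<in> closure T\<close> by blast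
  moreover have "at z1 within T = at z1 within S"
    unfolding T_def by (rule at_within_nhd[of _ "ball z1 d"]) (use \<open>d > 0\<close> in auto)
  ultimately show ?thesis by metis
qed

lemma primitive_tendsto_at_soft_point_of_angular_primitive:
  assumes hol: "w holomorphic_on ball 0 1" and "norm z1 = 1"
    and soft: "(angular_primitive w \<longlongrightarrow> LP) (at z1 within ball 0 1)"
  obtains W L where "\<And>z. z \<in> ball 0 1 \<Longrightarrow> (W has_field_derivative w z) (at z within ball 0 1)"
    and "(W \<longlongrightarrow> L) (at z1 within ball 0 1)"
proof -
  define P where "P = angular_primitive w"
  have P_deriv: "(P has_field_derivative - \<i> * (if z = 0 then deriv w 0 else (w z - w 0) / z))
                   (at z within ball 0 1)" if "z \<in> ball 0 1" for z
    unfolding P_def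
    by (rule has_field_derivative_at_within[OF angular_primitive_has_field_derivative[OF hol that]])
  then have "P holomorphic_on ball 0 1"
    by (meson holomorphic_on_def field_differentiable_def)
  then obtain Q where Q_deriv: "\<And>z. z \<in> ball 0 1 \<Longrightarrow> (Q has_field_derivative P z) (at z within ball 0 1)"
    using holomorphic_convex_primitive'[of "ball 0 1"] by auto
  have "\<forall>\<^sub>F z in at z1 within ball 0 1. norm (P z) < norm LP + 1"
    using tendsto_norm[OF soft[folded P_def]] by (rule order_tendstoD) simp
  then have "\<forall>\<^sub>F z in at z1 within ball 0 1. norm (P z) \<le> norm LP + 1"
    by (rule eventually_mono) simp
  then obtain LQ where Q_lim: "(Q \<longlongrightarrow> LQ) (at z1 within ball 0 1)"
    using primitive_tendsto_if_derivative_bounded[OF convex_ball _ _ Q_deriv] \<open>norm z1 = 1\<close> by auto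
  define W where "W = (\<lambda>z. w 0 * z + \<i> * z * P z - \<i> * Q z)"
  show thesis
  proof
    fix z :: complex assume z: "z \<in> ball 0 1"
    have "(W has_field_derivative w 0 * 1 + (\<i> * 1 * P z
            + - \<i> * (if z = 0 then deriv w 0 else (w z - w 0) / z) * (\<i> * z)) - \<i> * P z)
            (at z within ball 0 1)"
      unfolding W_def
      by (intro DERIV_diff DERIV_add DERIV_cmult DERIV_mult DERIV_ident P_deriv Q_deriv z)
    then show "(W has_field_derivative w z) (at z within ball 0 1)"
      by (cases "z = 0") (auto simp: algebra_simps diff_divide_distrib)
  next
    show "(W \<longlongrightarrow> w 0 * z1 + \<i> * z1 * LP - \<i> * LQ) (at z1 within ball 0 1)"
      unfolding W_def P_def by (intro tendsto_intros soft Q_lim)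
  qed
qed

lemma contour_integral_subpath_tendsto_primitive:
  assumes primitive: "\<And>z. z \<in> S \<Longrightarrow> (W has_field_derivative f z) (at z within S)"
    and W_lim: "(W \<longlongrightarrow> L) (at z1 within S)" and "z1 \<notin> S"
    and image: "\<gamma> ` {0..<1} \<subseteq> S" and valid: "\<forall>s\<in>{0<..<1}. valid_path (subpath 0 s \<gamma>)"
    and \<gamma>_lim: "(\<gamma> \<longlongrightarrow> z1) (at_left 1)"
  shows "((\<lambda>s. contour_integral (subpath 0 s \<gamma>) f) \<longlongrightarrow> L - W (\<gamma> 0)) (at_left 1)"
proof -
  have near_1: "\<forall>\<^sub>F s in at_left (1::real). s \<in> {0<..<1}"
    by (rule eventually_at_leftI[of 0]) auto
  have "\<forall>\<^sub>F s in at_left 1. \<gamma> s \<in> S \<and> \<gamma> s \<noteq> z1"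
    using near_1 by eventually_elim (use image \<open>z1 \<notin> S\<close> in \<open>force simp: image_subset_iff\<close>)
  with \<gamma>_lim have "filterlim \<gamma> (at z1 within S) (at_left 1)"
    unfolding filterlim_at by simp
  then have "((\<lambda>s. W (\<gamma> s)) \<longlongrightarrow> L) (at_left 1)"
    by (rule filterlim_compose[OF W_lim])
  then have "((\<lambda>s. W (\<gamma> s) - W (\<gamma> 0)) \<longlongrightarrow> L - W (\<gamma> 0)) (at_left 1)"
    by (intro tendsto_intros)
  moreover have "\<forall>\<^sub>F s in at_left 1. W (\<gamma> s) - W (\<gamma> 0) = contour_integral (subpath 0 s \<gamma>) f"
    using near_1
  proof eventually_elim
    case (elim s)
    have "path_image (subpath 0 s \<gamma>) \<subseteq> S"
      using elim image by (auto simp: path_image_subpath)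
    from contour_integral_primitive[OF primitive valid[rule_format, OF elim] this]
    show ?case
      by (simp add: contour_integral_unique pathstart_subpath pathfinish_subpath)
  qed
  ultimately show ?thesis
    by (rule Lim_transform_eventually)
qed

theorem mainTheorem10:
  fixes w :: "complex \<Rightarrow> complex" and z1 :: complex
  assumes "w holomorphic_on ball 0 1"
    and "norm z1 = 1"
    and "borderline_hard_singularity w z1"
  shows "\<forall>\<gamma> :: real \<Rightarrow> complex.
           \<gamma> ` {0..<1} \<subseteq> ball 0 1 \<and>
           (\<forall>s\<in>{0<..<1}. valid_path (subpath 0 s \<gamma>)) \<and>
           (\<gamma> \<longlongrightarrow> z1) (at_left 1)
         \<longrightarrow> (\<exists>L. ((\<lambda>s. contour_integral (subpath 0 s \<gamma>) w) \<longlongrightarrow> L) (at_left 1))"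
proof -
  obtain LP where "(angular_primitive w \<longlongrightarrow> LP) (at z1 within ball 0 1)"
    using assms(3) unfolding borderline_hard_singularity_def soft_singularity_def by blast
  then obtain W L where
    primitive: "\<And>z. z \<in> ball 0 1 \<Longrightarrow> (W has_field_derivative w z) (at z within ball 0 1)"
    and W_lim: "(W \<longlongrightarrow> L) (at z1 within ball 0 1)"
    using primitive_tendsto_at_soft_point_of_angular_primitive assms(1,2) by blast
  have "z1 \<notin> ball 0 1"
    using assms(2) by simp
  show ?thesis
  proof (intro allI impI, elim conjE)
    fix \<gamma> :: "real \<Rightarrow> complex"
    assume "\<gamma> ` {0..<1} \<subseteq> ball 0 1" "\<forall>s\<in>{0<..<1}. valid_path (subpath 0 s \<gamma>)"
      "(\<gamma> \<longlongrightarrow> z1) (at_left 1)"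
    from contour_integral_subpath_tendsto_primitive[OF primitive W_lim \<open>z1 \<notin> ball 0 1\<close> this]
    show "\<exists>L. ((\<lambda>s. contour_integral (subpath 0 s \<gamma>) w) \<longlongrightarrow> L) (at_left 1)" ..
  qed
qed

end
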